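(* The Lie algebra $\Lambda_1(\mathbb{Q}\mathrm{Par}_2)$ is generated by $x_1x_2$, $x_1^2x_2$, $x_1x_2^2$, and $x_1^3x_2+x_1x_2^3$.
   Context: The nonsymmetric operad of partitions $\mathrm{Par}$: $\mathrm{Par}((1))=\{1\}$, and for $m\ge2$, $\mathrm{Par}((m))$ is the set of monomials $\prod_{i=1}^Nx_i^{a_i}$ with $N\ge2$, all $a_i\ge1$, $\sum a_i=m$ (nontrivial order-preserving partitions of $\{1,\dots,m\}$ into consecutive blocks of sizes $a_1,\dots,a_N$). Partial composition: if $a_1+\dots+a_{l-1}+1\le s\le a_1+\dots+a_l$, then $\left(\prod_{i=1}^Nx_i^{a_i}\right)\circ_s\left(\prod_{k=1}^{N_s}x_k^{b_k}\right)=x_l^{a_l-1+\sum_kb_k}\prod_{i\ne l}x_i^{a_i}$; and $1$ is a two-sided unit. $\mathrm{Par}_2$ is the suboperad with $\mathrm{Par}_2((1))=\{1\}$ and $\mathrm{Par}_2((m))$ the monomials in $\mathrm{Par}((m))$ involving only $x_1,x_2$, i.e. $x_1^ax_2^b$ with $a,b\ge1$, $a+b=m$. $\Lambda_1(\mathbb{Q}\mathrm{Par}_2)=\bigoplus_{m\ge2}\mathbb{Q}\mathrm{Par}_2((m))$ with Lie bracket $[c,d]=\sum_{t=1}^{j}d\circ_tc-\sum_{s=1}^{k}c\circ_sd$ for $c\in\mathrm{Par}_2((k))$, $d\in\mathrm{Par}_2((j))$, extended bilinearly. *)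

theory Defs
  imports Complex_Main "HOL-Library.Function_Algebras"
begin

text \<open>A monomial x1^a x2^b of Par_2((a+b)), a,b \<ge> 1, is encoded by the pair (a,b).\<close>

definition is_par2 :: "nat \<times> nat \<Rightarrow> bool" where
  "is_par2 c \<longleftrightarrow> fst c \<ge> 1 \<and> snd c \<ge> 1"

definition arity :: "nat \<times> nat \<Rightarrow> nat" where
  "arity c = fst c + snd c"

text \<open>Partial composition in Par_2: (x1^a x2^b) o_s (x1^p x2^q), for 1 \<le> s \<le> a+b.\<close>
definition parcomp :: "nat \<times> nat \<Rightarrow> nat \<Rightarrow> nat \<times> nat \<Rightarrow> nat \<times> nat" where
  "parcomp c s d =
     (if s \<le> fst c then (fst c - 1 + arity d, snd c) else (fst c, snd c - 1 + arity d))"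

text \<open>Vectors of Q Par_2: finitely supported rational functions on the monomials.\<close>
definition basis_vec :: "nat \<times> nat \<Rightarrow> (nat \<times> nat \<Rightarrow> rat)" where
  "basis_vec c = (\<lambda>m. if m = c then 1 else 0)"

definition par2_space :: "(nat \<times> nat \<Rightarrow> rat) set" where
  "par2_space = {f. finite {m. f m \<noteq> 0} \<and> (\<forall>m. f m \<noteq> 0 \<longrightarrow> is_par2 m)}"

definition bracket_basis :: "nat \<times> nat \<Rightarrow> nat \<times> nat \<Rightarrow> (nat \<times> nat \<Rightarrow> rat)" where
  "bracket_basis c d =
     (\<Sum>t = 1..arity d. basis_vec (parcomp d t c)) - (\<Sum>s = 1..arity c. basis_vec (parcomp c s d))"

definition lie_bracket :: "(nat \<times> nat \<Rightarrow> rat) \<Rightarrow> (nat \<times> nat \<Rightarrow> rat) \<Rightarrow> (nat \<times> nat \<Rightarrow> rat)" where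
  "lie_bracket f g =
     (\<Sum>c\<in>{m. f m \<noteq> 0}. \<Sum>d\<in>{m. g m \<noteq> 0}. (\<lambda>m. f c * g d * bracket_basis c d m))"

inductive_set lie_generated :: "(nat \<times> nat \<Rightarrow> rat) set \<Rightarrow> (nat \<times> nat \<Rightarrow> rat) set"
  for S where
  gen_base: "x \<in> S \<Longrightarrow> x \<in> lie_generated S"
| gen_zero: "0 \<in> lie_generated S"
| gen_add: "x \<in> lie_generated S \<Longrightarrow> y \<in> lie_generated S \<Longrightarrow> x + y \<in> lie_generated S"
| gen_smult: "x \<in> lie_generated S \<Longrightarrow> (\<lambda>m. r * x m) \<in> lie_generated S"
| gen_bracket: "x \<in> lie_generated S \<Longrightarrow> y \<in> lie_generated S \<Longrightarrow> lie_bracket x y \<in> lie_generated S"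

end

theory Submission
  imports Defs
begin

text \<open>
  Bracketing with x1 x2 acts on a monomial x1^a x2^b by
  [x1 x2, x1^a x2^b] = a x1^(a+1) x2^b + b x1^a x2^(b+1) - x1^(a+b) x2 - x1 x2^(a+b).
  Hence, once all monomials of arity N and the two extreme monomials x1^N x2, x1 x2^N of
  arity N + 1 are generated, the other monomials of arity N + 1 follow one after another,
  solving for x1^(a+1) x2^b.  For arity N + 1 \<ge> 5 the extreme monomials are a rational
  combination of five brackets of x1 x2, x1^2 x2, x1 x2^2 with monomials of lower arity;
  in arity 4 these brackets span only a plane, which is why x1^3 x2 + x1 x2^3 is needed
  as a generator.  Conversely, finitely supported functions on Par_2 form a Lie subalgebra
  spanned by the monomials.
\<close>

lemma sum_fun_apply: "(sum F A) x = sum (\<lambda>a. F a x) A"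
  by (induction A rule: infinite_finite_induct) auto

lemma sum_basis_vec_parcomp:
  assumes "a \<ge> 1" "b \<ge> 1"
  shows "(\<Sum>t = 1..arity (a,b). basis_vec (parcomp (a,b) t c))
     = of_nat a * basis_vec (a - 1 + arity c, b) + of_nat b * basis_vec (a, b - 1 + arity c)"
proof -
  have split: "{1..a+b} = {1..a} \<union> {a+1..a+b}" using assms by auto
  have "(\<Sum>t = 1..arity (a,b). basis_vec (parcomp (a,b) t c))
      = (\<Sum>t\<in>{1..a}. basis_vec (parcomp (a,b) t c)) + (\<Sum>t\<in>{a+1..a+b}. basis_vec (parcomp (a,b) t c))"
    unfolding arity_def fst_conv snd_conv split by (rule sum.union_disjoint) auto
  also have "(\<Sum>t\<in>{1..a}. basis_vec (parcomp (a,b) t c)) = (\<Sum>t\<in>{1..a}. basis_vec (a - 1 + arity c, b))"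
    by (rule sum.cong) (auto simp: parcomp_def)
  also have "(\<Sum>t\<in>{a+1..a+b}. basis_vec (parcomp (a,b) t c)) = (\<Sum>t\<in>{a+1..a+b}. basis_vec (a, b - 1 + arity c))"
    by (rule sum.cong) (auto simp: parcomp_def)
  finally show ?thesis using assms by (simp add: fun_eq_iff)
qed

lemma bracket_basis_eq:
  assumes "p \<ge> 1" "q \<ge> 1" "a \<ge> 1" "b \<ge> 1"
  shows "bracket_basis (p,q) (a,b) =
     of_nat a * basis_vec (a + p + q - 1, b) + of_nat b * basis_vec (a, b + p + q - 1)
   - of_nat p * basis_vec (p + a + b - 1, q) - of_nat q * basis_vec (p, q + a + b - 1)"
proof -
  have "(\<Sum>t = 1..arity (a,b). basis_vec (parcomp (a,b) t (p,q)))
     = of_nat a * basis_vec (a + p + q - 1, b) + of_nat b * basis_vec (a, b + p + q - 1)"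
    using sum_basis_vec_parcomp[of a b "(p,q)"] assms by (simp add: arity_def add.assoc)
  moreover have "(\<Sum>t = 1..arity (p,q). basis_vec (parcomp (p,q) t (a,b)))
     = of_nat p * basis_vec (p + a + b - 1, q) + of_nat q * basis_vec (p, q + a + b - 1)"
    using sum_basis_vec_parcomp[of p q "(a,b)"] assms by (simp add: arity_def add.assoc)
  ultimately show ?thesis unfolding bracket_basis_def by simp
qed

lemma support_basis_vec: "{m. basis_vec c m \<noteq> 0} = {c}"
  by (auto simp: basis_vec_def)

lemma lie_bracket_basis_vec: "lie_bracket (basis_vec c) (basis_vec d) = bracket_basis c d"
  unfolding lie_bracket_def support_basis_vec by (simp add: basis_vec_def)

lemma par2_space_zero: "0 \<in> par2_space"
  by (simp add: par2_space_def)

lemma par2_space_add: "x \<in> par2_space \<Longrightarrow> y \<in> par2_space \<Longrightarrow> x + y \<in> par2_space"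
proof -
  assume "x \<in> par2_space" "y \<in> par2_space"
  moreover have "{m. (x + y) m \<noteq> 0} \<subseteq> {m. x m \<noteq> 0} \<union> {m. y m \<noteq> 0}" by auto
  ultimately show ?thesis unfolding par2_space_def by (auto intro: finite_subset)
qed

lemma par2_space_smult: "x \<in> par2_space \<Longrightarrow> (\<lambda>m. r * x m) \<in> par2_space"
proof -
  assume "x \<in> par2_space"
  moreover have "{m. r * x m \<noteq> 0} \<subseteq> {m. x m \<noteq> 0}" by auto
  ultimately show ?thesis unfolding par2_space_def by (auto intro: finite_subset)
qed

lemma par2_space_of_nat_mult: "x \<in> par2_space \<Longrightarrow> of_nat k * x \<in> par2_space"
  using par2_space_smult[of x "of_nat k"] by (simp add: times_fun_def)

lemma par2_space_diff:
  assumes "x \<in> par2_space" "y \<in> par2_space"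
  shows "x - y \<in> par2_space"
proof -
  have "x + (\<lambda>m. -1 * y m) \<in> par2_space"
    using assms by (intro par2_space_add par2_space_smult)
  moreover have "x + (\<lambda>m. -1 * y m) = x - y" by (simp add: fun_eq_iff)
  ultimately show ?thesis by simp
qed

lemma par2_space_sum: "(\<And>a. a \<in> A \<Longrightarrow> g a \<in> par2_space) \<Longrightarrow> sum g A \<in> par2_space"
  by (induction A rule: infinite_finite_induct) (auto intro: par2_space_zero par2_space_add)

lemma basis_vec_in_par2_space: "is_par2 c \<Longrightarrow> basis_vec c \<in> par2_space"
  unfolding par2_space_def support_basis_vec by (auto simp: basis_vec_def)

lemma bracket_basis_in_par2_space:
  assumes "is_par2 c" "is_par2 d"
  shows "bracket_basis c d \<in> par2_space"
proof -
  obtain p q a b where "c = (p,q)" "d = (a,b)" "p \<ge> 1" "q \<ge> 1" "a \<ge> 1" "b \<ge> 1"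
    using assms unfolding is_par2_def by (metis prod.collapse)
  then show ?thesis
    by (simp add: bracket_basis_eq)
      (intro par2_space_add par2_space_diff par2_space_of_nat_mult basis_vec_in_par2_space;
       simp add: is_par2_def)
qed

lemma lie_bracket_in_par2_space:
  assumes x: "x \<in> par2_space" and y: "y \<in> par2_space"
  shows "lie_bracket x y \<in> par2_space"
  unfolding lie_bracket_def
proof (intro par2_space_sum)
  fix c d assume "c \<in> {m. x m \<noteq> 0}" "d \<in> {m. y m \<noteq> 0}"
  then have "is_par2 c" "is_par2 d" using x y unfolding par2_space_def mem_Collect_eq by blast+
  then show "(\<lambda>m. x c * y d * bracket_basis c d m) \<in> par2_space"
    by (intro par2_space_smult bracket_basis_in_par2_space)
qed

lemma lie_generated_subset_par2_space:
  assumes "S \<subseteq> par2_space"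
  shows "lie_generated S \<subseteq> par2_space"
proof
  fix x assume "x \<in> lie_generated S"
  then show "x \<in> par2_space"
    by (induction rule: lie_generated.induct)
      (use assms in \<open>blast intro: par2_space_zero par2_space_add par2_space_smult
        lie_bracket_in_par2_space\<close>)+
qed

lemma basis_expansion:
  assumes "finite {m. f m \<noteq> 0}"
  shows "(\<Sum>m | f m \<noteq> 0. (\<lambda>x. f m * basis_vec m x)) = f"
proof
  fix x
  have "(\<Sum>m | f m \<noteq> 0. (\<lambda>x. f m * basis_vec m x)) x = (\<Sum>m | f m \<noteq> 0. if m = x then f x else 0)"
    unfolding sum_fun_apply by (rule sum.cong) (auto simp: basis_vec_def)
  also have "\<dots> = f x" using assms by simp
  finally show "(\<Sum>m | f m \<noteq> 0. (\<lambda>x. f m * basis_vec m x)) x = f x" .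
qed

lemma lie_generated_sum:
  "(\<And>a. a \<in> A \<Longrightarrow> g a \<in> lie_generated S) \<Longrightarrow> sum g A \<in> lie_generated S"
  by (induction A rule: infinite_finite_induct) (auto intro: gen_zero gen_add)

lemma lie_generated_diff:
  assumes "x \<in> lie_generated S" "y \<in> lie_generated S"
  shows "x - y \<in> lie_generated S"
proof -
  have "x + (\<lambda>m. -1 * y m) \<in> lie_generated S"
    using assms by (intro gen_add gen_smult)
  moreover have "x + (\<lambda>m. -1 * y m) = x - y" by (simp add: fun_eq_iff)
  ultimately show ?thesis by simp
qed

lemma lie_generated_of_nat_mult:
  "x \<in> lie_generated S \<Longrightarrow> of_nat k * x \<in> lie_generated S"
  using gen_smult[of x S "of_nat k"] by (simp add: times_fun_def)

lemma lie_generated_of_nat_mult_cancel: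
  assumes "of_nat k * x \<in> lie_generated S" "k > 0"
  shows "x \<in> lie_generated S"
  using gen_smult[OF assms(1), of "1 / of_nat k"] assms(2) by (simp add: times_fun_def)

lemma bracket_basis_in_lie_generated:
  "basis_vec c \<in> lie_generated S \<Longrightarrow> basis_vec d \<in> lie_generated S
    \<Longrightarrow> bracket_basis c d \<in> lie_generated S"
  using gen_bracket[of "basis_vec c" S "basis_vec d"] by (simp add: lie_bracket_basis_vec)

lemma par2_space_subset_lie_generated:
  assumes "\<And>m. is_par2 m \<Longrightarrow> basis_vec m \<in> lie_generated S"
  shows "par2_space \<subseteq> lie_generated S"
proof
  fix f assume f: "f \<in> par2_space"
  then have "(\<Sum>m | f m \<noteq> 0. (\<lambda>x. f m * basis_vec m x)) \<in> lie_generated S"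
    by (intro lie_generated_sum gen_smult assms) (auto simp: par2_space_def)
  with f show "f \<in> lie_generated S"
    by (simp add: basis_expansion par2_space_def)
qed

lemma monomials_arity_4:
  assumes g11: "basis_vec (1,1) \<in> lie_generated S"
    and g21: "basis_vec (2,1) \<in> lie_generated S"
    and g12: "basis_vec (1,2) \<in> lie_generated S"
    and g4: "basis_vec (3,1) + basis_vec (1,3) \<in> lie_generated S"
  shows "basis_vec (3,1) \<in> lie_generated S" "basis_vec (2,2) \<in> lie_generated S"
    "basis_vec (1,3) \<in> lie_generated S"
proof -
  define s where "s = basis_vec (3,1) + basis_vec (1,3)"
  define u where "u = bracket_basis (1,1) (2,1)"
  define v where "v = bracket_basis (1,1) (1,2)"
  have s: "s \<in> lie_generated S" unfolding s_def by (rule g4)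
  have u: "u \<in> lie_generated S" unfolding u_def by (rule bracket_basis_in_lie_generated[OF g11 g21])
  have v: "v \<in> lie_generated S" unfolding v_def by (rule bracket_basis_in_lie_generated[OF g11 g12])
  have u_eq: "u = basis_vec (3,1) + basis_vec (2,2) - basis_vec (1,3)"
    unfolding u_def by (subst bracket_basis_eq) (simp_all add: numeral_2_eq_2 numeral_3_eq_3)
  have v_eq: "v = basis_vec (2,2) + basis_vec (1,3) - basis_vec (3,1)"
    unfolding v_def by (subst bracket_basis_eq) (simp_all add: numeral_2_eq_2 numeral_3_eq_3)
  have "of_nat 4 * basis_vec (3,1) = of_nat 2 * s + u - v"
    "of_nat 4 * basis_vec (1,3) = of_nat 2 * s - u + v"
    "of_nat 2 * basis_vec (2,2) = u + v"
    unfolding u_eq v_eq s_def by (simp_all add: algebra_simps)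
  moreover have "of_nat 2 * s + u - v \<in> lie_generated S" "of_nat 2 * s - u + v \<in> lie_generated S"
    "u + v \<in> lie_generated S"
    by (intro lie_generated_diff gen_add lie_generated_of_nat_mult s u v)+
  ultimately show "basis_vec (3,1) \<in> lie_generated S" "basis_vec (2,2) \<in> lie_generated S"
    "basis_vec (1,3) \<in> lie_generated S"
    by (metis lie_generated_of_nat_mult_cancel zero_less_numeral)+
qed

lemma extreme_monomials:
  assumes g11: "basis_vec (1,1) \<in> lie_generated S"
    and g21: "basis_vec (2,1) \<in> lie_generated S"
    and g12: "basis_vec (1,2) \<in> lie_generated S"
    and lower: "\<And>a b. a \<ge> 1 \<Longrightarrow> b \<ge> 1 \<Longrightarrow> a + b < n + 5 \<Longrightarrow> basis_vec (a,b) \<in> lie_generated S"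
  shows "basis_vec (1, n+4) \<in> lie_generated S" "basis_vec (n+4, 1) \<in> lie_generated S"
proof -
  define A where "A = bracket_basis (1,1) (1,n+3)"
  define B where "B = bracket_basis (1,1) (n+3,1)"
  define P where "P = bracket_basis (2,1) (1,n+2)"
  define Q where "Q = bracket_basis (1,2) (1,n+2)"
  define W where "W = bracket_basis (1,1) (2,n+2)"
  have brackets: "A \<in> lie_generated S" "B \<in> lie_generated S" "P \<in> lie_generated S"
    "Q \<in> lie_generated S" "W \<in> lie_generated S"
    unfolding A_def B_def P_def Q_def W_def
    by (intro bracket_basis_in_lie_generated g11 g21 g12 lower; simp)+
  have A_eq: "A = basis_vec (2, n+3) + of_nat (n+3) * basis_vec (1, n+4) - basis_vec (n+4, 1) - basis_vec (1, n+4)"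
    unfolding A_def by (subst bracket_basis_eq) (simp_all add: ac_simps numeral_eq_Suc)
  have B_eq: "B = of_nat (n+3) * basis_vec (n+4, 1) + basis_vec (n+3, 2) - basis_vec (n+4, 1) - basis_vec (1, n+4)"
    unfolding B_def by (subst bracket_basis_eq) (simp_all add: ac_simps numeral_eq_Suc)
  have P_eq: "P = basis_vec (3, n+2) + of_nat (n+2) * basis_vec (1, n+4) - 2 * basis_vec (n+4, 1) - basis_vec (2, n+3)"
    unfolding P_def by (subst bracket_basis_eq) (simp_all add: ac_simps numeral_eq_Suc)
  have Q_eq: "Q = basis_vec (3, n+2) + of_nat (n+2) * basis_vec (1, n+4) - basis_vec (n+3, 2) - 2 * basis_vec (1, n+4)"
    unfolding Q_def by (subst bracket_basis_eq) (simp_all add: ac_simps numeral_eq_Suc)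
  have W_eq: "W = 2 * basis_vec (3, n+2) + of_nat (n+2) * basis_vec (2, n+3) - basis_vec (n+4, 1) - basis_vec (1, n+4)"
    unfolding W_def by (subst bracket_basis_eq) (simp_all add: ac_simps numeral_eq_Suc)
  \<comment> \<open>X and Y eliminate x1^3 x2^(n+2), x1^2 x2^(n+3) and x1^(n+3) x2^2; the remaining
    2 \<times> 2 system in the extreme monomials has determinant (n+5)(n+1)(n+6) \<noteq> 0.\<close>
  define X where "X = of_nat 2 * P - W + of_nat (n+4) * A"
  define Y where "Y = P - Q + A - B"
  have X: "X \<in> lie_generated S" and Y: "Y \<in> lie_generated S"
    unfolding X_def Y_def using brackets
    by (intro gen_add lie_generated_diff lie_generated_of_nat_mult; simp)+
  have "of_nat ((n+5)*(n+1)*(n+6)) * basis_vec (1, n+4) = of_nat (n+5) * X - of_nat (n+7) * Y"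
    unfolding X_def Y_def A_eq B_eq P_eq Q_eq W_eq by (simp add: algebra_simps)
  moreover have "of_nat (n+5) * X - of_nat (n+7) * Y \<in> lie_generated S"
    by (intro lie_generated_diff lie_generated_of_nat_mult X Y)
  ultimately have "of_nat ((n+5)*(n+1)*(n+6)) * basis_vec (1, n+4) \<in> lie_generated S"
    by (simp only:)
  then show left: "basis_vec (1, n+4) \<in> lie_generated S"
    by (rule lie_generated_of_nat_mult_cancel) simp
  have "of_nat (n+5) * basis_vec (n+4, 1) = of_nat (n+5) * basis_vec (1, n+4) - Y"
    unfolding Y_def A_eq B_eq P_eq Q_eq W_eq by (simp add: algebra_simps)
  moreover have "of_nat (n+5) * basis_vec (1, n+4) - Y \<in> lie_generated S"
    by (intro lie_generated_diff lie_generated_of_nat_mult left Y)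
  ultimately have "of_nat (n+5) * basis_vec (n+4, 1) \<in> lie_generated S"
    by (simp only:)
  then show "basis_vec (n+4, 1) \<in> lie_generated S"
    by (rule lie_generated_of_nat_mult_cancel) simp
qed

lemma interior_monomials:
  assumes g11: "basis_vec (1,1) \<in> lie_generated S"
    and lower: "\<And>a b. a \<ge> 1 \<Longrightarrow> b \<ge> 1 \<Longrightarrow> a + b = N \<Longrightarrow> basis_vec (a,b) \<in> lie_generated S"
    and left: "basis_vec (1, N) \<in> lie_generated S"
    and right: "basis_vec (N, 1) \<in> lie_generated S"
    and "1 \<le> a" "a \<le> N"
  shows "basis_vec (a, N + 1 - a) \<in> lie_generated S"
  using \<open>1 \<le> a\<close> \<open>a \<le> N\<close>
proof (induction a rule: nat_induct_at_least)
  case base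
  then show ?case using left by simp
next
  case (Suc a)
  define b where "b = N - a"
  have a: "a \<ge> 1" and b: "b \<ge> 1" "a + b = N" using Suc unfolding b_def by auto
  have "N + 1 - a = b + 1" using b by simp
  with Suc have prev: "basis_vec (a, b + 1) \<in> lie_generated S" by simp
  have W: "bracket_basis (1,1) (a,b) \<in> lie_generated S"
    by (intro bracket_basis_in_lie_generated g11 lower a b)
  have "bracket_basis (1,1) (a,b) = of_nat a * basis_vec (a+1, b) + of_nat b * basis_vec (a, b+1)
      - basis_vec (N, 1) - basis_vec (1, N)"
    using a b by (subst bracket_basis_eq) auto
  then have "of_nat a * basis_vec (a+1, b)
      = bracket_basis (1,1) (a,b) - of_nat b * basis_vec (a, b+1) + basis_vec (N, 1) + basis_vec (1, N)"
    by (simp add: algebra_simps)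
  moreover have "bracket_basis (1,1) (a,b) - of_nat b * basis_vec (a, b+1) + basis_vec (N, 1)
      + basis_vec (1, N) \<in> lie_generated S"
    by (intro gen_add lie_generated_diff lie_generated_of_nat_mult W prev left right)
  ultimately have "of_nat a * basis_vec (a+1, b) \<in> lie_generated S"
    by (simp only:)
  then have "basis_vec (a+1, b) \<in> lie_generated S"
    by (rule lie_generated_of_nat_mult_cancel) (use a in simp)
  then show ?case by (simp add: b_def)
qed

lemma basis_vec_in_lie_generated:
  assumes g11: "basis_vec (1,1) \<in> lie_generated S"
    and g21: "basis_vec (2,1) \<in> lie_generated S"
    and g12: "basis_vec (1,2) \<in> lie_generated S"
    and g4: "basis_vec (3,1) + basis_vec (1,3) \<in> lie_generated S"
    and "a \<ge> 1" "b \<ge> 1"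
  shows "basis_vec (a,b) \<in> lie_generated S"
  using \<open>a \<ge> 1\<close> \<open>b \<ge> 1\<close>
proof (induction "a + b" arbitrary: a b rule: less_induct)
  case less
  show ?case
  proof (cases "a + b \<le> 4")
    case True
    then have "(a,b) \<in> {(1,1),(1,2),(2,1),(1,3),(2,2),(3,1)}"
      using less.prems by auto
    then show ?thesis using g11 g12 g21 monomials_arity_4[OF assms(1-4)] by auto
  next
    case False
    define n where "n = a + b - 5"
    have n: "a + b = n + 5" using False by (simp add: n_def)
    have lower: "\<And>a' b'. a' \<ge> 1 \<Longrightarrow> b' \<ge> 1 \<Longrightarrow> a' + b' < n + 5 \<Longrightarrow> basis_vec (a',b') \<in> lie_generated S"
      using less.hyps n by auto
    have "basis_vec (a, n + 4 + 1 - a) \<in> lie_generated S"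
    proof (rule interior_monomials[OF g11 _ extreme_monomials[OF g11 g21 g12 lower]])
      show "\<And>a b. 1 \<le> a \<Longrightarrow> 1 \<le> b \<Longrightarrow> a + b = n + 4 \<Longrightarrow> basis_vec (a, b) \<in> lie_generated S"
        by (rule lower) auto
      show "1 \<le> a" "a \<le> n + 4" using less.prems n by auto
    qed
    moreover have "n + 4 + 1 - a = b" using n by linarith
    ultimately show ?thesis by simp
  qed
qed

theorem theorem6p1:
  shows "lie_generated {basis_vec (1,1), basis_vec (2,1), basis_vec (1,2),
            basis_vec (3,1) + basis_vec (1,3)} = par2_space"
    (is "lie_generated ?G = _")
proof
  show "lie_generated ?G \<subseteq> par2_space"
    by (intro lie_generated_subset_par2_space)
      (auto intro!: basis_vec_in_par2_space par2_space_add simp: is_par2_def)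
  show "par2_space \<subseteq> lie_generated ?G"
  proof (rule par2_space_subset_lie_generated)
    fix m :: "nat \<times> nat" assume "is_par2 m"
    then show "basis_vec m \<in> lie_generated ?G"
      by (cases m) (simp add: is_par2_def basis_vec_in_lie_generated gen_base)
  qed
qed

end
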